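(* Let $\alpha$ be an $E$-semigroup on $B(\mathcal H)$ and let $\beta,\gamma\in\mathrm{Sub}(\alpha)$. Then $\gamma\le\beta$ if and only if $\gamma_t(I)\le\beta_t(I)$ for all $t\ge0$.
   Context: An $E$-semigroup on $B(\mathcal H)$ is a family $(\alpha_t)_{t\ge0}$ of normal ${}^*$-endomorphisms with $\alpha_0=\mathrm{id}$, $\alpha_{s+t}=\alpha_s\alpha_t$, and $t\mapsto\alpha_t(S)$ weak-operator continuous. For $E$-semigroups, $\beta\le\alpha$ means $\alpha_t-\beta_t$ is completely positive for all $t$. $\mathrm{Sub}(\alpha)$ is the set of $E$-semigroups $\beta$ with $\beta\le\alpha$. *)

theory Defs
  imports "HOL-Analysis.Analysis"
begin

text \<open>HOL-Analysis has no complex inner product spaces, so we introduce a type class of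
complex Hilbert spaces: a real Banach space with a compatible complex scalar
multiplication and a complex inner product (linear in the second argument)
inducing the norm.\<close>

class chilbert = real_normed_vector + complete_space +
  fixes scaleC :: "complex \<Rightarrow> 'a \<Rightarrow> 'a" (infixr "*\<^sub>C" 75)
    and cinner :: "'a \<Rightarrow> 'a \<Rightarrow> complex"
  assumes scaleC_of_real: "scaleC (complex_of_real r) x = scaleR r x"
    and scaleC_add_left: "scaleC (a + b) x = scaleC a x + scaleC b x"
    and scaleC_add_right: "scaleC a (x + y) = scaleC a x + scaleC a y"
    and scaleC_scaleC: "scaleC a (scaleC b x) = scaleC (a * b) x"
    and scaleC_one: "scaleC 1 x = x"
    and cinner_conj: "cinner x y = cnj (cinner y x)"
    and cinner_add_right: "cinner x (y + z) = cinner x y + cinner x z"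
    and cinner_scaleC_right: "cinner x (scaleC a y) = a * cinner x y"
    and norm_cinner: "norm x = sqrt (Re (cinner x x))"

definition bop :: "('a::chilbert \<Rightarrow> 'a) \<Rightarrow> bool" where
  "bop T \<longleftrightarrow> bounded_linear T \<and> (\<forall>c x. T (c *\<^sub>C x) = c *\<^sub>C T x)"

definition BH :: "('a::chilbert \<Rightarrow> 'a) set" where
  "BH = {T. bop T}"

definition adjoint_pair :: "('a::chilbert \<Rightarrow> 'a) \<Rightarrow> ('a \<Rightarrow> 'a) \<Rightarrow> bool" where
  "adjoint_pair S T \<longleftrightarrow> (\<forall>x y. cinner (T x) y = cinner x (S y))"

definition selfadj :: "('a::chilbert \<Rightarrow> 'a) \<Rightarrow> bool" where
  "selfadj T \<longleftrightarrow> T \<in> BH \<and> adjoint_pair T T"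

definition posop :: "('a::chilbert \<Rightarrow> 'a) \<Rightarrow> bool" where
  "posop T \<longleftrightarrow> (\<forall>x. Im (cinner x (T x)) = 0 \<and> 0 \<le> Re (cinner x (T x)))"

definition ople :: "('a::chilbert \<Rightarrow> 'a) \<Rightarrow> ('a \<Rightarrow> 'a) \<Rightarrow> bool" where
  "ople A B \<longleftrightarrow> posop (\<lambda>x. B x - A x)"

type_synonym 'a opmap = "('a \<Rightarrow> 'a) \<Rightarrow> ('a \<Rightarrow> 'a)"

text \<open>An operator matrix \<open>[T i j]_{i,j<n}\<close> in \<open>M_n(B(H))\<close> is positive iff
  \<open>\<Sum>i j. \<langle>x_i, T_ij x_j\<rangle> \<ge> 0\<close> for all \<open>x_0,\<dots>,x_{n-1} \<in> H\<close>.\<close>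
definition matpos :: "nat \<Rightarrow> (nat \<Rightarrow> nat \<Rightarrow> ('a::chilbert \<Rightarrow> 'a)) \<Rightarrow> bool" where
  "matpos n T \<longleftrightarrow> (\<forall>x :: nat \<Rightarrow> 'a.
      Im (\<Sum>i<n. \<Sum>j<n. cinner (x i) (T i j (x j))) = 0 \<and>
      0 \<le> Re (\<Sum>i<n. \<Sum>j<n. cinner (x i) (T i j (x j))))"

text \<open>Complete positivity of a map \<open>\<phi>\<close> on B(H): every amplification
  \<open>\<phi>\<^sub>n = id \<otimes> \<phi>\<close> on \<open>M_n(B(H))\<close> is positive.\<close>
definition completely_positive :: "'a::chilbert opmap \<Rightarrow> bool" where
  "completely_positive \<phi> \<longleftrightarrow>
     (\<forall>n T. (\<forall>i<n. \<forall>j<n. T i j \<in> BH) \<longrightarrow> matpos n T \<longrightarrow> matpos n (\<lambda>i j. \<phi> (T i j)))"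

definition star_endo :: "'a::chilbert opmap \<Rightarrow> bool" where
  "star_endo \<phi> \<longleftrightarrow>
     (\<forall>S\<in>BH. \<phi> S \<in> BH) \<and>
     (\<forall>S\<in>BH. \<forall>T\<in>BH. \<phi> (\<lambda>x. S x + T x) = (\<lambda>x. \<phi> S x + \<phi> T x)) \<and>
     (\<forall>S\<in>BH. \<forall>c. \<phi> (\<lambda>x. c *\<^sub>C S x) = (\<lambda>x. c *\<^sub>C \<phi> S x)) \<and>
     (\<forall>S\<in>BH. \<forall>T\<in>BH. \<phi> (S \<circ> T) = \<phi> S \<circ> \<phi> T) \<and>
     (\<forall>S\<in>BH. \<forall>T\<in>BH. adjoint_pair S T \<longrightarrow> adjoint_pair (\<phi> S) (\<phi> T))"

definition is_lub_sa :: "('a::chilbert \<Rightarrow> 'a) set \<Rightarrow> ('a \<Rightarrow> 'a) \<Rightarrow> bool" where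
  "is_lub_sa D L \<longleftrightarrow> selfadj L \<and> (\<forall>d\<in>D. ople d L) \<and>
     (\<forall>U. selfadj U \<longrightarrow> (\<forall>d\<in>D. ople d U) \<longrightarrow> ople L U)"

text \<open>Normality (order continuity): \<open>\<phi>\<close> preserves suprema of bounded increasing
  nets (nonempty upward-directed sets) of self-adjoint operators.\<close>
definition normal_map :: "'a::chilbert opmap \<Rightarrow> bool" where
  "normal_map \<phi> \<longleftrightarrow>
     (\<forall>D L. D \<noteq> {} \<longrightarrow> (\<forall>d\<in>D. selfadj d) \<longrightarrow>
        (\<forall>a\<in>D. \<forall>b\<in>D. \<exists>c\<in>D. ople a c \<and> ople b c) \<longrightarrow>
        is_lub_sa D L \<longrightarrow> is_lub_sa (\<phi> ` D) (\<phi> L))"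

definition E_semigroup :: "(real \<Rightarrow> 'a::chilbert opmap) \<Rightarrow> bool" where
  "E_semigroup \<alpha> \<longleftrightarrow>
     (\<forall>t\<ge>0. star_endo (\<alpha> t) \<and> normal_map (\<alpha> t)) \<and>
     (\<forall>S\<in>BH. \<alpha> 0 S = S) \<and>
     (\<forall>s\<ge>0. \<forall>t\<ge>0. \<forall>S\<in>BH. \<alpha> (s + t) S = \<alpha> s (\<alpha> t S)) \<and>
     (\<forall>S\<in>BH. \<forall>x y. continuous_on {0..} (\<lambda>t. cinner (\<alpha> t S x) y))"

definition sub_le :: "(real \<Rightarrow> 'a::chilbert opmap) \<Rightarrow> (real \<Rightarrow> 'a opmap) \<Rightarrow> bool" where
  "sub_le \<beta> \<alpha> \<longleftrightarrow> (\<forall>t\<ge>0. completely_positive (\<lambda>S x. \<alpha> t S x - \<beta> t S x))"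

definition Sub :: "(real \<Rightarrow> 'a::chilbert opmap) \<Rightarrow> (real \<Rightarrow> 'a opmap) set" where
  "Sub \<alpha> = {\<beta>. E_semigroup \<beta> \<and> sub_le \<beta> \<alpha>}"

end

theory Submission
  imports Defs
begin

(* Fix t.  The maps A = alpha_t, B = beta_t, G = gamma_t are (not necessarily
   unital) *-endomorphisms of B(H), and A - B, A - G are completely positive.  Write
   P = B(1), Q = G(1); these are orthogonal projections.  The argument is
   pointwise in t and uses only this algebraic situation:
   (1) complete positivity of A - B forces B to be a corner of A:
       P A(X) = B(X) = A(X) P  (a Schwarz-type argument on 2x2 matrices);
   (2) if Q <= P then QP = Q = PQ, and combining with (1) for B and G gives
       the compression formula  B(X) - G(X) = (P - Q) (A(X) - G(X)) (P - Q);
   (3) a compression V* psi(.) V of a completely positive map psi is again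
       completely positive.
   Hence Q <= P implies B - G is completely positive; conversely complete
   positivity of B - G evaluated at the identity gives Q <= P.  The theorem
   is this equivalence applied at every t >= 0. *)

lemma cinner_add_left: "cinner (x + y) z = cinner x z + cinner y z"
  by (metis cinner_conj cinner_add_right complex_cnj_add)

lemma cinner_scaleC_left: "cinner (c *\<^sub>C x) y = cnj c * cinner x y"
  by (metis cinner_conj cinner_scaleC_right complex_cnj_mult)

lemma cinner_zero_right [simp]: "cinner x 0 = 0"
  using cinner_add_right[of x 0 0] by simp

lemma cinner_zero_left [simp]: "cinner 0 x = 0"
  by (metis cinner_conj cinner_zero_right complex_cnj_zero)

lemma cinner_diff_right: "cinner x (y - z) = cinner x y - cinner x z"
  using cinner_add_right[of x "y - z" z] by simp

lemma cinner_minus_right: "cinner x (- y) = - cinner x y"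
  using cinner_diff_right[of x 0 y] by simp

lemma cinner_diff_left: "cinner (x - y) z = cinner x z - cinner y z"
  using cinner_add_left[of "x - y" y z] by simp

lemma cinner_self_Im: "Im (cinner x x) = 0"
proof -
  have "Im (cinner x x) = Im (cnj (cinner x x))" by (metis cinner_conj)
  thus ?thesis by simp
qed

lemma cinner_self_Re_ge: "0 \<le> Re (cinner x x)"
proof (rule ccontr)
  assume "\<not> ?thesis"
  then have "sqrt (Re (cinner x x)) < 0" by simp
  with norm_cinner[of x] show False by (metis norm_ge_zero not_le)
qed

lemma cinner_self_norm: "Re (cinner x x) = (norm x)^2"
  using norm_cinner[of x] cinner_self_Re_ge[of x] by simp

lemma cinner_self_zero: "cinner x x = 0 \<Longrightarrow> x = 0"
  using cinner_self_norm[of x] by simp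

lemma cinner_ext_right: "(\<And>u. cinner u y = cinner u z) \<Longrightarrow> y = z"
proof -
  assume h: "\<And>u. cinner u y = cinner u z"
  have "cinner (y - z) (y - z) = 0" using h[of "y - z"] by (simp add: cinner_diff_right)
  thus "y = z" using cinner_self_zero by fastforce
qed

lemma cinner_ext_left: "(\<And>u. cinner y u = cinner z u) \<Longrightarrow> y = z"
  by (metis cinner_conj cinner_ext_right)

lemma scaleC_diff_right: "c *\<^sub>C (x - y) = c *\<^sub>C x - c *\<^sub>C (y::'a::chilbert)"
  using scaleC_add_right[of c "x - y" y] by simp

lemma BH_iff: "T \<in> BH \<longleftrightarrow> bounded_linear T \<and> (\<forall>c x. T (c *\<^sub>C x) = c *\<^sub>C T x)"
  by (simp add: BH_def bop_def)

lemma BH_add: "T \<in> BH \<Longrightarrow> T (x + y) = T x + T y"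
  using BH_iff bounded_linear.linear linear_add by blast

lemma BH_diff: "T \<in> BH \<Longrightarrow> T (x - y) = T x - T y"
  using BH_iff bounded_linear.linear linear_diff by blast

lemma BH_zero: "T \<in> BH \<Longrightarrow> T 0 = 0"
  using BH_iff bounded_linear.linear linear_0 by blast

lemma BH_scale: "T \<in> BH \<Longrightarrow> T (c *\<^sub>C x) = c *\<^sub>C T x"
  using BH_iff by blast

lemma id_BH: "id \<in> BH"
  by (simp add: BH_iff bounded_linear_ident[unfolded id_def[symmetric]])

lemma comp_BH: "S \<in> BH \<Longrightarrow> T \<in> BH \<Longrightarrow> S \<circ> T \<in> BH"
  unfolding BH_iff using bounded_linear_compose[of S T] by (simp add: o_def)

lemma diff_BH: "S \<in> BH \<Longrightarrow> T \<in> BH \<Longrightarrow> (\<lambda>x. S x - T x) \<in> BH"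
  unfolding BH_iff using bounded_linear_sub[of S T] by (simp add: scaleC_diff_right)

lemma adjoint_pair_id: "adjoint_pair id id"
  by (simp add: adjoint_pair_def)

lemma adjoint_pair_sym: "adjoint_pair S T \<Longrightarrow> adjoint_pair T S"
  unfolding adjoint_pair_def by (metis cinner_conj)

section \<open>The unit of a *-endomorphism is a projection\<close>

lemma star_endo_BH: "star_endo \<phi> \<Longrightarrow> S \<in> BH \<Longrightarrow> \<phi> S \<in> BH"
  by (simp add: star_endo_def)

lemma star_endo_comp: "star_endo \<phi> \<Longrightarrow> S \<in> BH \<Longrightarrow> T \<in> BH \<Longrightarrow> \<phi> (S \<circ> T) = \<phi> S \<circ> \<phi> T"
  by (simp add: star_endo_def)

lemma star_endo_adjoint:
  "star_endo \<phi> \<Longrightarrow> S \<in> BH \<Longrightarrow> T \<in> BH \<Longrightarrow> adjoint_pair S T \<Longrightarrow> adjoint_pair (\<phi> S) (\<phi> T)"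
  by (simp add: star_endo_def)

lemma star_endo_unit_idem: "star_endo \<phi> \<Longrightarrow> \<phi> id (\<phi> id x) = \<phi> id x"
  using star_endo_comp[of \<phi> id id] id_BH by (metis comp_apply id_comp)

lemma star_endo_unit_left: "star_endo \<phi> \<Longrightarrow> S \<in> BH \<Longrightarrow> \<phi> id (\<phi> S x) = \<phi> S x"
  using star_endo_comp[of \<phi> id S] id_BH by (metis comp_apply id_comp)

lemma star_endo_unit_selfadj: "star_endo \<phi> \<Longrightarrow> cinner (\<phi> id x) y = cinner x (\<phi> id y)"
  using star_endo_adjoint[of \<phi> id id] id_BH adjoint_pair_id unfolding adjoint_pair_def by blast

lemma unit_order_absorb:
  fixes B G :: "'a::chilbert opmap"
  assumes B: "star_endo B" and G: "star_endo G" and le: "ople (G id) (B id)"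
  shows "G id (B id w) = G id w" and "B id (G id w) = G id w"
proof -
  have pBH: "B id \<in> BH" and qBH: "G id \<in> BH"
    using star_endo_BH[OF B id_BH] star_endo_BH[OF G id_BH] by auto
  have qp: "G id (B id w) = G id w" for w
  proof -
    define u where "u = w - B id w"
    have pu: "B id u = 0" unfolding u_def using BH_diff[OF pBH] star_endo_unit_idem[OF B] by simp
    have "0 \<le> Re (cinner u (B id u - G id u))" using le unfolding ople_def posop_def by blast
    moreover have "cinner u (B id u - G id u) = - cinner (G id u) (G id u)"
      using pu by (simp add: cinner_diff_right cinner_minus_right
          star_endo_unit_selfadj[OF G] star_endo_unit_idem[OF G])
    ultimately have "norm (G id u) ^ 2 \<le> 0" by (simp add: cinner_self_norm)
    then have "G id u = 0" by simp
    then show ?thesis unfolding u_def using BH_diff[OF qBH] by simp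
  qed
  then show "G id (B id w) = G id w" .
  show "B id (G id w) = G id w"
  proof (rule cinner_ext_left)
    fix v
    have "cinner (B id (G id w)) v = cinner (G id w) (B id v)" using star_endo_unit_selfadj[OF B] by simp
    also have "\<dots> = cinner w (G id (B id v))" using star_endo_unit_selfadj[OF G] by simp
    also have "\<dots> = cinner w (G id v)" using qp by simp
    also have "\<dots> = cinner (G id w) v" using star_endo_unit_selfadj[OF G] by simp
    finally show "cinner (B id (G id w)) v = cinner (G id w) v" .
  qed
qed

definition matform :: "nat \<Rightarrow> (nat \<Rightarrow> nat \<Rightarrow> ('a::chilbert \<Rightarrow> 'a)) \<Rightarrow> (nat \<Rightarrow> 'a) \<Rightarrow> (nat \<Rightarrow> 'a) \<Rightarrow> complex"
  where "matform n T x y = (\<Sum>i<n. \<Sum>j<n. cinner (x i) (T i j (y j)))"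

lemma matpos_matform: "matpos n T \<Longrightarrow> Im (matform n T x x) = 0 \<and> 0 \<le> Re (matform n T x x)"
  unfolding matpos_def matform_def by blast

definition unit_vec :: "nat \<Rightarrow> 'a::chilbert \<Rightarrow> nat \<Rightarrow> 'a"
  where "unit_vec i u = (\<lambda>k. if k = i then u else 0)"

lemma matform_add_left: "matform n T (\<lambda>k. x k + x' k) y = matform n T x y + matform n T x' y"
  by (simp add: matform_def cinner_add_left sum.distrib)

lemma matform_add_right:
  assumes "\<forall>k<n. \<forall>l<n. T k l \<in> BH"
  shows "matform n T x (\<lambda>k. y k + y' k) = matform n T x y + matform n T x y'"
  unfolding matform_def using assms
  by (simp add: BH_add cinner_add_right sum.distrib[symmetric])

lemma matform_unit_vec:
  assumes "i < n" "j < n" "\<forall>k<n. \<forall>l<n. T k l \<in> BH"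
  shows "matform n T (unit_vec i u) (unit_vec j w) = cinner u (T i j w)"
proof -
  have "matform n T (unit_vec i u) (unit_vec j w)
      = (\<Sum>k<n. \<Sum>l<n. if k = i then (if l = j then cinner u (T i j w) else 0) else 0)"
    unfolding matform_def using assms(3) by (intro sum.cong refl) (auto simp: unit_vec_def BH_zero)
  also have "\<dots> = (\<Sum>k<n. if k = i then cinner u (T i j w) else 0)"
    using assms(2) by (intro sum.cong refl) simp
  also have "\<dots> = cinner u (T i j w)" using assms(1) by simp
  finally show ?thesis .
qed

lemma matpos_two_entries:
  fixes i j n :: nat
  assumes mp: "matpos n T" and ij: "i < n" "j < n" and BH: "\<forall>k<n. \<forall>l<n. T k l \<in> BH"
  shows "Im (cinner u (T i i u) + cinner u (T i j w) + cinner w (T j i u) + cinner w (T j j w)) = 0 \<and>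
         0 \<le> Re (cinner u (T i i u) + cinner u (T i j w) + cinner w (T j i u) + cinner w (T j j w))"
proof -
  define x where "x = (\<lambda>k. unit_vec i u k + unit_vec j w k)"
  have "matform n T x x
      = cinner u (T i i u) + cinner u (T i j w) + cinner w (T j i u) + cinner w (T j j w)"
    unfolding x_def
    by (simp add: matform_add_left matform_add_right[OF BH] matform_unit_vec[OF _ _ BH] ij)
  then show ?thesis using matpos_matform[OF mp, of x] by simp
qed

lemma cp_unit_pos:
  assumes "completely_positive \<phi>"
  shows "Im (cinner v (\<phi> id v)) = 0 \<and> 0 \<le> Re (cinner v (\<phi> id v))"
proof -
  have "matpos 1 (\<lambda>i j. (id :: 'a \<Rightarrow> 'a))"
    unfolding matpos_def by (simp add: cinner_self_Im cinner_self_Re_ge)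
  then have "matpos 1 (\<lambda>i j. \<phi> id)"
    using assms[unfolded completely_positive_def, rule_format, of 1 "\<lambda>i j. id"] id_BH by simp
  from matpos_matform[OF this, of "\<lambda>_. v"] show ?thesis by (simp add: matform_def)
qed

text \<open>Test the form
  at \<open>u\<close> or \<open>\<i> u\<close> in slot \<open>i\<close> and \<open>w\<close> in slot \<open>j\<close>.\<close>

lemma matpos_adjoint_entries:
  fixes i j n :: nat
  assumes mp: "matpos n T" and ij: "i < n" "j < n" and BH: "\<forall>k<n. \<forall>l<n. T k l \<in> BH"
  shows "adjoint_pair (T j i) (T i j)"
  unfolding adjoint_pair_def
proof (intro allI)
  fix b a
  have BHij: "T i j \<in> BH" "T j i \<in> BH" "T i i \<in> BH" "T j j \<in> BH" using BH ij by auto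
  have d1: "Im (cinner a (T i i a)) = 0" using matpos_two_entries[OF mp ij(1) ij(1) BH, of 0 a] BHij
    by (simp add: BH_zero)
  have d2: "Im (cinner b (T j j b)) = 0" using matpos_two_entries[OF mp ij(2) ij(2) BH, of 0 b] BHij
    by (simp add: BH_zero)
  have h1: "Im (cinner a (T i j b)) + Im (cinner b (T j i a)) = 0"
    using matpos_two_entries[OF mp ij BH, of a b] d1 d2 by simp
  have h2: "Re (cinner b (T j i a)) - Re (cinner a (T i j b)) = 0"
    using matpos_two_entries[OF mp ij BH, of "\<i> *\<^sub>C a" b] d1 d2 BHij
    by (simp add: BH_scale cinner_scaleC_left cinner_scaleC_right)
  have "cinner b (T j i a) = cnj (cinner a (T i j b))"
    using h1 h2 by (simp add: complex_eq_iff)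
  then show "cinner (T i j b) a = cinner b (T j i a)" by (metis cinner_conj)
qed

section \<open>A Schwarz-type inequality for completely positive maps\<close>

lemma affine_nonneg_slope_zero: assumes "\<And>r::real. 0 \<le> r * a + b" shows "a = 0"
proof (rule ccontr)
  assume "a \<noteq> 0"
  then have "0 \<le> (-(\<bar>b\<bar>+1)/a) * a + b" using assms by blast
  moreover have "(-(\<bar>b\<bar>+1)/a) * a = -(\<bar>b\<bar>+1)" using \<open>a \<noteq> 0\<close> by simp
  ultimately show False by linarith
qed

text \<open>This is the
  degenerate case of the positivity of a \<open>2 \<times> 2\<close> matrix whose first diagonal entry
  vanishes.\<close>

lemma hermitian_form_coeff_zero:
  assumes h: "\<And>s. Im (cnj s * c + s * d + e) = 0 \<and> 0 \<le> Re (cnj s * c + s * d + e)"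
  shows "c = 0"
proof -
  have h1: "Re c + Re d = 0"
  proof (rule affine_nonneg_slope_zero)
    fix r :: real show "0 \<le> r * (Re c + Re d) + Re e" using h[of "complex_of_real r"]
      by (simp add: algebra_simps)
  qed
  have h2: "Im c - Im d = 0"
  proof (rule affine_nonneg_slope_zero)
    fix r :: real show "0 \<le> r * (Im c - Im d) + Re e" using h[of "\<i> * complex_of_real r"]
      by (simp add: algebra_simps)
  qed
  have e0: "Im e = 0" using h[of 0] by simp
  have h3: "Im c + Im d = 0" using h[of 1] e0 by simp
  have h4: "Re d - Re c = 0" using h[of "\<i>"] e0 by simp
  show ?thesis using h1 h2 h3 h4 by (simp add: complex_eq_iff)
qed

text \<open>The Gram-type matrix \<open>[[1, X], [X\<^sup>*, X\<^sup>*X]]\<close> is positive: its form at \<open>x\<close> is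
  \<open>\<parallel>x\<^sub>0 + X x\<^sub>1\<parallel>\<^sup>2\<close>.\<close>

definition gram2 :: "('a::chilbert \<Rightarrow> 'a) \<Rightarrow> ('a \<Rightarrow> 'a) \<Rightarrow> nat \<Rightarrow> nat \<Rightarrow> ('a \<Rightarrow> 'a)"
  where "gram2 X Xs = (\<lambda>i j. if i = 0 then (if j = 0 then id else X) else (if j = 0 then Xs else Xs \<circ> X))"

lemma matpos_gram2:
  assumes "adjoint_pair Xs X"
  shows "matpos 2 (gram2 X Xs)"
  unfolding matpos_def
proof
  fix x :: "nat \<Rightarrow> 'a"
  have adj: "\<And>a b. cinner (X a) b = cinner a (Xs b)" using assms by (simp add: adjoint_pair_def)
  have "(\<Sum>i<2. \<Sum>j<2. cinner (x i) (gram2 X Xs i j (x j))) = cinner (x 0 + X (x 1)) (x 0 + X (x 1))"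
    by (simp add: gram2_def numeral_2_eq_2 lessThan_Suc cinner_add_left cinner_add_right adj add_ac)
  then show "Im (\<Sum>i<2. \<Sum>j<2. cinner (x i) (gram2 X Xs i j (x j))) = 0 \<and>
      0 \<le> Re (\<Sum>i<2. \<Sum>j<2. cinner (x i) (gram2 X Xs i j (x j)))"
    by (simp add: cinner_self_Im cinner_self_Re_ge)
qed

text \<open>Apply \<open>\<phi>\<^sub>2\<close> to the Gram-type matrix and evaluate its form at \<open>(s v, w)\<close>.\<close>

lemma cp_kernel_vanish:
  fixes \<phi> :: "'a::chilbert opmap"
  assumes cp: "completely_positive \<phi>" and X: "X \<in> BH" "Xs \<in> BH" "adjoint_pair Xs X"
    and phBH: "\<And>S. S \<in> BH \<Longrightarrow> \<phi> S \<in> BH"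
    and v0: "cinner v (\<phi> id v) = 0"
  shows "cinner v (\<phi> X w) = 0"
proof -
  define T where "T = gram2 X Xs"
  have TBH: "\<forall>i<2. \<forall>j<2. T i j \<in> BH" using X by (simp add: T_def gram2_def id_BH comp_BH)
  have mp: "matpos 2 (\<lambda>i j. \<phi> (T i j))"
    using cp[unfolded completely_positive_def, rule_format, of 2 T] TBH matpos_gram2[OF X(3)]
    by (simp add: T_def)
  have BH2: "\<forall>k<2. \<forall>l<2. \<phi> (T k l) \<in> BH" using TBH phBH by simp
  have phid: "\<phi> id \<in> BH" and phXs: "\<phi> Xs \<in> BH" using phBH id_BH X by auto
  define c where "c = cinner v (\<phi> X w)"
  define d where "d = cinner w (\<phi> Xs v)"
  define e where "e = cinner w (\<phi> (Xs \<circ> X) w)"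
  have "Im (cnj s * c + s * d + e) = 0 \<and> 0 \<le> Re (cnj s * c + s * d + e)" for s
  proof -
    let ?q = "cinner (s *\<^sub>C v) (\<phi> (T 0 0) (s *\<^sub>C v)) + cinner (s *\<^sub>C v) (\<phi> (T 0 1) w)
        + cinner w (\<phi> (T 1 0) (s *\<^sub>C v)) + cinner w (\<phi> (T 1 1) w)"
    have "Im ?q = 0 \<and> 0 \<le> Re ?q" using matpos_two_entries[OF mp _ _ BH2, of 0 1] by simp
    moreover have "?q = cnj s * c + s * d + e"
      using phid phXs v0
      by (simp add: T_def gram2_def c_def d_def e_def BH_scale cinner_scaleC_left cinner_scaleC_right)
    ultimately show ?thesis by (metis (no_types))
  qed
  then show ?thesis using hermitian_form_coeff_zero unfolding c_def by blast
qed

section \<open>Subordinate *-endomorphisms are corners\<close>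

text \<open>For \<open>v = B(1) u\<close> the number \<open>\<langle>v, (A - B)(1) v\<rangle>\<close> is
  nonnegative, but also equals \<open>-\<parallel>v - A(1) v\<parallel>\<^sup>2\<close>; so it vanishes, and the
  Schwarz-type lemma kills \<open>\<langle>v, (A - B)(X) w\<rangle>\<close>.\<close>

lemma subordinate_unit_left:
  fixes A B :: "'a::chilbert opmap"
  assumes A: "star_endo A" and B: "star_endo B"
    and cp: "completely_positive (\<lambda>S x. A S x - B S x)"
    and X: "X \<in> BH" "Xs \<in> BH" "adjoint_pair Xs X"
  shows "B id (A X w) = B X w"
proof -
  have phBH: "\<And>S. S \<in> BH \<Longrightarrow> (\<lambda>x. A S x - B S x) \<in> BH"
    using star_endo_BH[OF A] star_endo_BH[OF B] diff_BH by blast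
  have key: "cinner (B id u) (A X w) = cinner (B id u) (B X w)" for u
  proof -
    define v where "v = B id u"
    have pv: "B id v = v" unfolding v_def using star_endo_unit_idem[OF B] .
    define z where "z = cinner v (A id v) - cinner v v"
    have z1: "cinner v (A id v - B id v) = z"
      by (simp add: z_def pv cinner_diff_right)
    have zpos: "Im z = 0 \<and> 0 \<le> Re z" using cp_unit_pos[OF cp, of v] z1 by simp
    have "cinner (v - A id v) (v - A id v) = - z"
      by (simp add: z_def cinner_diff_left cinner_diff_right star_endo_unit_selfadj[OF A] star_endo_unit_idem[OF A])
    then have "0 \<le> Re (- z)" using cinner_self_Re_ge by metis
    then have "z = 0" using zpos by (simp add: complex_eq_iff)
    then have "cinner v (A id v - B id v) = 0" using z1 by simp
    then have "cinner v ((\<lambda>S x. A S x - B S x) X w) = 0"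
      by (intro cp_kernel_vanish[OF cp X phBH]) simp
    then show ?thesis unfolding v_def by (simp add: cinner_diff_right)
  qed
  show ?thesis
  proof (rule cinner_ext_right)
    fix u
    have "cinner u (B id (A X w)) = cinner (B id u) (A X w)" using star_endo_unit_selfadj[OF B] by simp
    also have "\<dots> = cinner (B id u) (B X w)" by (rule key)
    also have "\<dots> = cinner u (B id (B X w))" using star_endo_unit_selfadj[OF B] by simp
    also have "\<dots> = cinner u (B X w)" using star_endo_unit_left[OF B X(1)] by simp
    finally show "cinner u (B id (A X w)) = cinner u (B X w)" .
  qed
qed

lemma subordinate_unit_right:
  fixes A B :: "'a::chilbert opmap"
  assumes A: "star_endo A" and B: "star_endo B"
    and cp: "completely_positive (\<lambda>S x. A S x - B S x)"
    and X: "X \<in> BH" "Xs \<in> BH" "adjoint_pair Xs X"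
  shows "A X (B id u) = B X u"
proof (rule cinner_ext_left)
  fix w
  have a1: "adjoint_pair (A Xs) (A X)" using star_endo_adjoint[OF A X(2) X(1) X(3)] .
  have a2: "adjoint_pair (B Xs) (B X)" using star_endo_adjoint[OF B X(2) X(1) X(3)] .
  have h: "B id (A Xs w) = B Xs w" using subordinate_unit_left[OF A B cp X(2) X(1) adjoint_pair_sym[OF X(3)]] .
  have "cinner (A X (B id u)) w = cinner (B id u) (A Xs w)" using a1 by (simp add: adjoint_pair_def)
  also have "\<dots> = cinner u (B id (A Xs w))" using star_endo_unit_selfadj[OF B] by simp
  also have "\<dots> = cinner u (B Xs w)" using h by simp
  also have "\<dots> = cinner (B X u) w" using a2 by (simp add: adjoint_pair_def)
  finally show "cinner (A X (B id u)) w = cinner (B X u) w" .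
qed

section \<open>The compression formula\<close>

text \<open>For *-endomorphisms \<open>B, G\<close> subordinate to \<open>A\<close> with \<open>Q = G(1) \<le> P = B(1)\<close>:
  \<open>B(X) - G(X) = (P - Q) (A(X) - G(X)) (P - Q)\<close>, stated in matrix coefficients.
  Put \<open>z = B(X) b - G(X) b\<close>; by the corner relations \<open>(A - G)(X) (P - Q) b = z\<close>,
  \<open>P z = z\<close> and \<open>Q z = 0\<close>.\<close>

lemma compression_formula:
  fixes A B G :: "'a::chilbert opmap"
  assumes A: "star_endo A" and B: "star_endo B" and G: "star_endo G"
    and cpB: "completely_positive (\<lambda>S x. A S x - B S x)"
    and cpG: "completely_positive (\<lambda>S x. A S x - G S x)"
    and le: "ople (G id) (B id)"
    and X: "X \<in> BH" "Xs \<in> BH" "adjoint_pair Xs X"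
  shows "cinner a (B X b - G X b) =
    cinner (B id a - G id a) (A X (B id b - G id b) - G X (B id b - G id b))"
proof -
  have pBH: "B id \<in> BH" and qBH: "G id \<in> BH" 
    using star_endo_BH[OF B id_BH] star_endo_BH[OF G id_BH] by auto
  have AXBH: "A X \<in> BH" using star_endo_BH[OF A X(1)] .
  have B_right: "\<And>u. A X (B id u) = B X u" using subordinate_unit_right[OF A B cpB X] .
  have G_right: "\<And>u. A X (G id u) = G X u" using subordinate_unit_right[OF A G cpG X] .
  have G_left: "\<And>w. G id (A X w) = G X w" using subordinate_unit_left[OF A G cpG X] .
  have B_left: "\<And>w. B id (A X w) = B X w" using subordinate_unit_left[OF A B cpB X] .
  have qp: "\<And>w. G id (B id w) = G id w" using unit_order_absorb(1)[OF B G le] .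
  have pq: "\<And>w. B id (G id w) = G id w" using unit_order_absorb(2)[OF B G le] .
  have qq: "\<And>w. G id (G id w) = G id w" using star_endo_unit_idem[OF G] .
  define z where "z = B X b - G X b"
  have G_on_diff: "G X (B id b - G id b) = 0"
  proof -
    have "G X (B id b - G id b) = A X (G id (B id b - G id b))" using G_right by simp
    also have "\<dots> = A X 0" using BH_diff[OF qBH] qp qq by simp
    also have "\<dots> = 0" using BH_zero[OF AXBH] .
    finally show ?thesis .
  qed
  have A_on_diff: "A X (B id b - G id b) = z" unfolding z_def using BH_diff[OF AXBH] B_right G_right by simp
  have G_via_A: "G X b = G id (A X b)" using G_left by simp
  have B_via_A: "B X b = B id (A X b)" using B_left by simp
  have pz: "B id z = z" 
    unfolding z_def G_via_A BH_diff[OF pBH] using star_endo_unit_left[OF B X(1)] pq by simp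
  have qz: "G id z = 0" unfolding z_def G_via_A B_via_A BH_diff[OF qBH] using qp qq by simp
  have "cinner (B id a - G id a) (A X (B id b - G id b) - G X (B id b - G id b))
      = cinner (B id a) z - cinner (G id a) z"
    by (simp add: G_on_diff A_on_diff cinner_diff_left)
  also have "\<dots> = cinner a (B id z) - cinner a (G id z)" 
    using star_endo_unit_selfadj[OF B] star_endo_unit_selfadj[OF G] by simp
  also have "\<dots> = cinner a z" using pz qz by simp
  finally show ?thesis unfolding z_def by simp
qed

text \<open>If \<open>\<phi>(X) = V\<^sup>* \<psi>(X) V\<close> (tested in matrix coefficients) for all operators
  having an adjoint, and \<open>\<psi>\<close> is completely positive, then so is \<open>\<phi>\<close>: the
  quadratic form of \<open>\<phi>\<^sub>n(T)\<close> at \<open>x\<close> is that of \<open>\<psi>\<^sub>n(T)\<close> at \<open>V x\<close>.  Entries of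
  a positive operator matrix have adjoints, so the hypothesis applies to them.\<close>

lemma cp_compression:
  fixes \<phi> \<psi> :: "'a::chilbert opmap" and V :: "'a \<Rightarrow> 'a"
  assumes cp: "completely_positive \<psi>"
    and compress: "\<And>X Xs a b. X \<in> BH \<Longrightarrow> Xs \<in> BH \<Longrightarrow> adjoint_pair Xs X \<Longrightarrow>
                     cinner a (\<phi> X b) = cinner (V a) (\<psi> X (V b))"
  shows "completely_positive \<phi>"
  unfolding completely_positive_def
proof (intro allI impI)
  fix n and T :: "nat \<Rightarrow> nat \<Rightarrow> 'a \<Rightarrow> 'a"
  assume TBH: "\<forall>i<n. \<forall>j<n. T i j \<in> BH" and mpT: "matpos n T"
  have mp\<psi>: "matpos n (\<lambda>i j. \<psi> (T i j))"
    using cp TBH mpT unfolding completely_positive_def by blast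
  have form_eq: "(\<Sum>i<n. \<Sum>j<n. cinner (x i) (\<phi> (T i j) (x j)))
      = (\<Sum>i<n. \<Sum>j<n. cinner (V (x i)) (\<psi> (T i j) (V (x j))))" for x
  proof (intro sum.cong refl)
    fix i j assume "i \<in> {..<n}" "j \<in> {..<n}"
    then have ij: "i < n" "j < n" by auto
    show "cinner (x i) (\<phi> (T i j) (x j)) = cinner (V (x i)) (\<psi> (T i j) (V (x j)))"
      using compress TBH ij matpos_adjoint_entries[OF mpT ij TBH] by blast
  qed
  show "matpos n (\<lambda>i j. \<phi> (T i j))"
    unfolding matpos_def form_eq
  proof
    fix x :: "nat \<Rightarrow> 'a"
    show "Im (\<Sum>i<n. \<Sum>j<n. cinner (V (x i)) (\<psi> (T i j) (V (x j)))) = 0 \<and>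
        0 \<le> Re (\<Sum>i<n. \<Sum>j<n. cinner (V (x i)) (\<psi> (T i j) (V (x j))))"
      using spec[OF mp\<psi>[unfolded matpos_def], of "\<lambda>k. V (x k)"] by simp
  qed
qed

lemma subordinate_cp_iff:
  fixes A B G :: "'a::chilbert opmap"
  assumes A: "star_endo A" and B: "star_endo B" and G: "star_endo G"
    and cpB: "completely_positive (\<lambda>S x. A S x - B S x)"
    and cpG: "completely_positive (\<lambda>S x. A S x - G S x)"
  shows "completely_positive (\<lambda>S x. B S x - G S x) \<longleftrightarrow> ople (G id) (B id)"
proof
  assume "completely_positive (\<lambda>S x. B S x - G S x)"
  from cp_unit_pos[OF this] show "ople (G id) (B id)"
    unfolding ople_def posop_def by simp
next
  assume le: "ople (G id) (B id)"
  show "completely_positive (\<lambda>S x. B S x - G S x)"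
  proof (rule cp_compression[OF cpG, where V = "\<lambda>x. B id x - G id x"])
    fix X Xs :: "'a \<Rightarrow> 'a" and a b :: 'a
    assume "X \<in> BH" "Xs \<in> BH" "adjoint_pair Xs X"
    then show "cinner a (B X b - G X b) =
        cinner (B id a - G id a) (A X (B id b - G id b) - G X (B id b - G id b))"
      by (rule compression_formula[OF A B G cpB cpG le])
  qed
qed

theorem lemma3p1:
  fixes \<alpha> \<beta> \<gamma> :: "real \<Rightarrow> 'a::chilbert opmap"
  assumes "E_semigroup \<alpha>"
    and "\<beta> \<in> Sub \<alpha>"
    and "\<gamma> \<in> Sub \<alpha>"
  shows "sub_le \<gamma> \<beta> \<longleftrightarrow> (\<forall>t\<ge>0. ople (\<gamma> t id) (\<beta> t id))"
proof -
  have "completely_positive (\<lambda>S x. \<beta> t S x - \<gamma> t S x) \<longleftrightarrow> ople (\<gamma> t id) (\<beta> t id)"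
    if t: "0 \<le> t" for t
  proof (rule subordinate_cp_iff)
    show "star_endo (\<alpha> t)" "star_endo (\<beta> t)" "star_endo (\<gamma> t)"
      using assms t unfolding Sub_def E_semigroup_def by auto
    show "completely_positive (\<lambda>S x. \<alpha> t S x - \<beta> t S x)"
      "completely_positive (\<lambda>S x. \<alpha> t S x - \<gamma> t S x)"
      using assms t unfolding Sub_def sub_le_def by auto
  qed
  then show ?thesis
    unfolding sub_le_def by blast
qed

end
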